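(* Let $\mathcal X,\mathcal W$ be measurable spaces, $\mathcal Z=\mathcal X\times\mathcal W$, and let $(X,W,Y)$ have a joint distribution on $\mathcal X\times\mathcal W\times\mathbb R$ with $\mathbb E[Y^2]<\infty$; write $Z=(X,W)$. Let $n,m\ge 1$ be integers, $N=n+m$, and $\lambda\ge 0$. Let $\mathcal F\subset L^2(P_X)$ and $\mathcal G\subset L^2(P_Z)$ be nonempty closed convex sets, where each $f:\mathcal X\to\mathbb R$ is identified with its lift $(x,w)\mapsto f(x)$ on $\mathcal Z$. Define the population loss $$\mathcal{L}(f,g;\lambda)=\frac{n}{N}\mathbb{E}[(Y-f(X))^2]+\frac{m}{N}\mathbb{E}[(g(Z)-f(X))^2]+\lambda\frac{n}{N}\mathbb{E}[(Y-g(Z))^2],$$ and let $\mu(x)=\mathbb E[Y\mid X=x]$ and $\eta(z)=\mathbb E[Y\mid Z=z]$. Then any $(f^\star,g^\star)\in\mathcal F\times\mathcal G$ minimizing $\mathcal L(\cdot,\cdot;\lambda)$ over $\mathcal F\times\mathcal G$ satisfies $$f^\star=\Pi_{\mathcal{F}}\left(\frac{n}{N} \mu+\frac{m}{N}\mathbb{E}[g^\star(Z)\mid X=\cdot\,]\right),\qquad g^\star=\Pi_{\mathcal{G}}\left(\frac{m}{m+n\lambda} f^\star+\frac{n\lambda}{m+n\lambda}\eta\right).$$ Furthermore, if $\mu\in\mathcal F$, $\mu\in\mathcal G$ (via its lift) and $\eta\in\mathcal G$, then $$f^\star=\mu\quad\text{and}\quad g^\star=\frac{m}{m+n\lambda}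\mu+\frac{n\lambda}{m+n\lambda}\eta.$$
   Context: $\Pi_{\mathcal F}$ denotes the metric projection onto $\mathcal F$ in $L^2(P_X)$ (i.e. $\Pi_{\mathcal F}h\in\arg\min_{c\in\mathcal F}\mathbb E[(h(X)-c(X))^2]$), and $\Pi_{\mathcal G}$ the metric projection onto $\mathcal G$ in $L^2(P_Z)$. Here $P_X$, $P_Z$ are the marginal laws of $X$ and $Z$. *)

theory Defs
  imports "HOL-Probability.Probability"
begin

definition L2fun :: "'a measure \<Rightarrow> ('a \<Rightarrow> real) \<Rightarrow> bool" where
  "L2fun P f \<longleftrightarrow> f \<in> borel_measurable P \<and> integrable P (\<lambda>x. (f x)\<^sup>2)"

definition L2convex :: "'a measure \<Rightarrow> ('a \<Rightarrow> real) set \<Rightarrow> bool" where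
  "L2convex P S \<longleftrightarrow> (\<forall>f\<in>S. \<forall>g\<in>S. \<forall>t::real. 0 \<le> t \<and> t \<le> 1 \<longrightarrow>
      (\<lambda>x. t * f x + (1 - t) * g x) \<in> S)"

text \<open>Closedness in L2(P): every L2-limit of a sequence in S lies in S
  (in particular S is closed under P-a.e. modification).\<close>
definition L2closed :: "'a measure \<Rightarrow> ('a \<Rightarrow> real) set \<Rightarrow> bool" where
  "L2closed P S \<longleftrightarrow> (\<forall>fs f. (\<forall>k. fs k \<in> S) \<and> L2fun P f \<and>
      (\<lambda>k. \<integral>x. (fs k x - f x)\<^sup>2 \<partial>P) \<longlonglongrightarrow> 0 \<longrightarrow> f \<in> S)"

definition L2ccset :: "'a measure \<Rightarrow> ('a \<Rightarrow> real) set \<Rightarrow> bool" where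
  "L2ccset P S \<longleftrightarrow> S \<noteq> {} \<and> (\<forall>f\<in>S. L2fun P f) \<and> L2convex P S \<and> L2closed P S"

text \<open>h is a version of the conditional expectation x \<mapsto> E[V | T = x], where T is a
  random element with values in N: h is N-measurable and
  E[1_A(T) V] = E[1_A(T) h(T)] for all A in N.\<close>
definition cond_exp_version ::
  "'m measure \<Rightarrow> 'a measure \<Rightarrow> ('m \<Rightarrow> 'a) \<Rightarrow> ('m \<Rightarrow> real) \<Rightarrow> ('a \<Rightarrow> real) \<Rightarrow> bool" where
  "cond_exp_version M N T V h \<longleftrightarrow> h \<in> borel_measurable N \<and>
     (\<forall>A\<in>sets N. integrable M (\<lambda>\<omega>. indicator A (T \<omega>) * h (T \<omega>)) \<and>
        (\<integral>\<omega>. indicator A (T \<omega>) * V \<omega> \<partial>M) = (\<integral>\<omega>. indicator A (T \<omega>) * h (T \<omega>) \<partial>M))"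

definition is_proj ::
  "'m measure \<Rightarrow> ('m \<Rightarrow> 'a) \<Rightarrow> ('a \<Rightarrow> real) set \<Rightarrow> ('a \<Rightarrow> real) \<Rightarrow> ('a \<Rightarrow> real) \<Rightarrow> bool" where
  "is_proj M T S h c \<longleftrightarrow> c \<in> S \<and>
     (\<forall>c'\<in>S. (\<integral>\<omega>. (h (T \<omega>) - c (T \<omega>))\<^sup>2 \<partial>M) \<le> (\<integral>\<omega>. (h (T \<omega>) - c' (T \<omega>))\<^sup>2 \<partial>M))"

definition popLoss ::
  "'m measure \<Rightarrow> ('m \<Rightarrow> 'x) \<Rightarrow> ('m \<Rightarrow> 'w) \<Rightarrow> ('m \<Rightarrow> real) \<Rightarrow> nat \<Rightarrow> nat \<Rightarrow> real
    \<Rightarrow> ('x \<Rightarrow> real) \<Rightarrow> ('x \<times> 'w \<Rightarrow> real) \<Rightarrow> real" where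
  "popLoss M X W Y n m lam f g =
     real n / real (n + m) * (\<integral>\<omega>. (Y \<omega> - f (X \<omega>))\<^sup>2 \<partial>M)
   + real m / real (n + m) * (\<integral>\<omega>. (g (X \<omega>, W \<omega>) - f (X \<omega>))\<^sup>2 \<partial>M)
   + lam * (real n / real (n + m)) * (\<integral>\<omega>. (Y \<omega> - g (X \<omega>, W \<omega>))\<^sup>2 \<partial>M)"

end

theory Submission
  imports Defs
begin

text \<open>The residuals \<open>Y - \<mu>(X)\<close> and \<open>Y - \<eta>(Z)\<close> are orthogonal to every square-integrable
  function of \<open>X\<close> resp. \<open>Z\<close>. Expanding squares, a weighted sum \<open>a E(y\<^sub>1 - f)\<^sup>2 + b E(y\<^sub>2 - f)\<^sup>2\<close>
  with \<open>a + b = 1\<close> is therefore, up to a constant independent of \<open>f\<close>, the squared distance from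
  \<open>f\<close> to the mixture of the projections of \<open>y\<^sub>1, y\<^sub>2\<close>. Applied to \<open>f \<mapsto> L(f, g\<^sup>\<star>)\<close> and (after
  factoring out \<open>(m + n\<lambda>)/N\<close>) to \<open>g \<mapsto> L(f\<^sup>\<star>, g)\<close>, coordinatewise minimality becomes the
  projection property. The same orthogonality gives, with \<open>t = (m \<mu> + n\<lambda> \<eta>)/(m + n\<lambda>)\<close>,
  \<open>L(f, g) = L(\<mu>, t) + (n/N) E(f - \<mu>)\<^sup>2 + (m/N) E((g - t) - (f - \<mu>))\<^sup>2 + \<lambda>(n/N) E(g - t)\<^sup>2\<close>;
  so when \<open>(\<mu>, t)\<close> is feasible a minimiser has zero excess and coincides with it a.e.\<close>

lemma L2fun_integrable_square: "L2fun M u \<Longrightarrow> integrable M (\<lambda>x. (u x)\<^sup>2)"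
  unfolding L2fun_def by simp

lemma L2fun_integrable_mult:
  assumes "L2fun M u" "L2fun M v"
  shows "integrable M (\<lambda>x. u x * v x)"
proof (rule Bochner_Integration.integrable_bound)
  show "integrable M (\<lambda>x. (u x)\<^sup>2 + (v x)\<^sup>2)" and "(\<lambda>x. u x * v x) \<in> borel_measurable M"
    using assms unfolding L2fun_def by auto
  have "\<bar>u x * v x\<bar> \<le> (u x)\<^sup>2 + (v x)\<^sup>2" for x
  proof -
    have "\<bar>u x * v x\<bar> \<le> 2 * (\<bar>u x\<bar> * \<bar>v x\<bar>)" by (simp add: abs_mult)
    also have "\<dots> \<le> (u x)\<^sup>2 + (v x)\<^sup>2"
      using sum_squares_bound[of "\<bar>u x\<bar>" "\<bar>v x\<bar>"] by (simp add: mult.assoc)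
    finally show ?thesis .
  qed
  then show "AE x in M. norm (u x * v x) \<le> norm ((u x)\<^sup>2 + (v x)\<^sup>2)" by simp
qed

lemma L2fun_add:
  assumes "L2fun M u" "L2fun M v"
  shows "L2fun M (\<lambda>x. u x + v x)"
proof -
  have "(\<lambda>x. (u x + v x)\<^sup>2) = (\<lambda>x. (u x)\<^sup>2 + 2 * (u x * v x) + (v x)\<^sup>2)"
    by (simp add: power2_sum algebra_simps)
  then show ?thesis
    using assms L2fun_integrable_mult[OF assms] unfolding L2fun_def by auto
qed

lemma L2fun_cmult:
  assumes "L2fun M u"
  shows "L2fun M (\<lambda>x. c * u x)"
  using assms unfolding L2fun_def by (auto simp: power_mult_distrib)

lemma L2fun_diff:
  assumes "L2fun M u" "L2fun M v"
  shows "L2fun M (\<lambda>x. u x - v x)"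
  using L2fun_add[OF assms(1) L2fun_cmult[OF assms(2), of "-1"]] by simp

lemma L2fun_integral_square_eq_0_AE:
  assumes "L2fun M u" "(\<integral>x. (u x)\<^sup>2 \<partial>M) = 0"
  shows "AE x in M. u x = 0"
  using assms integral_nonneg_eq_0_iff_AE[OF L2fun_integrable_square[OF assms(1)]] by simp

lemma L2ccset_distr_memD:
  assumes "L2ccset (distr M N T) S" "T \<in> measurable M N" "f \<in> S"
  shows "f \<in> borel_measurable N" and "L2fun M (\<lambda>x. f (T x))"
  using assms unfolding L2ccset_def L2fun_def by (auto simp: integrable_distr_eq)

lemma L2ccset_convex_comb:
  assumes "L2ccset P S" "f \<in> S" "g \<in> S" "0 \<le> t" "t \<le> 1"
  shows "(\<lambda>x. t * f x + (1 - t) * g x) \<in> S"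
  using assms unfolding L2ccset_def L2convex_def by blast

lemma finite_measure_subalgebra_vimage_algebra:
  assumes "prob_space M" "T \<in> measurable M N"
  shows "finite_measure_subalgebra M (vimage_algebra (space M) T N)"
proof -
  interpret prob_space M by (rule assms(1))
  show ?thesis
    by unfold_locales (simp add: subalgebra_def sets_image_in_sets[OF refl assms(2)])
qed

lemma measurable_comp_vimage_algebra:
  assumes "T \<in> measurable M N" "\<phi> \<in> borel_measurable N"
  shows "(\<lambda>\<omega>. \<phi> (T \<omega>)) \<in> borel_measurable (vimage_algebra (space M) T N)"
  using measurable_compose[OF measurable_vimage_algebra1 assms(2)] measurable_space[OF assms(1)]
  by blast

context
  fixes M :: "'m measure" and N :: "'a measure" and T :: "'m \<Rightarrow> 'a" and V h
  assumes prob: "prob_space M" and T: "T \<in> measurable M N" and V: "L2fun M V"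
    and ce: "cond_exp_version M N T V h"
begin

lemma cond_exp_version_AE_eq_real_cond_exp:
  "AE \<omega> in M. real_cond_exp M (vimage_algebra (space M) T N) V \<omega> = h (T \<omega>)"
proof -
  interpret finite_measure_subalgebra M "vimage_algebra (space M) T N"
    by (rule finite_measure_subalgebra_vimage_algebra[OF prob T])
  have h: "h \<in> borel_measurable N"
    and ceA: "\<And>A. A \<in> sets N \<Longrightarrow> integrable M (\<lambda>\<omega>. indicator A (T \<omega>) * h (T \<omega>)) \<and>
        (\<integral>\<omega>. indicator A (T \<omega>) * V \<omega> \<partial>M) = (\<integral>\<omega>. indicator A (T \<omega>) * h (T \<omega>) \<partial>M)"
    using ce unfolding cond_exp_version_def by auto
  have T_space: "T \<in> space M \<rightarrow> space N" using measurable_space[OF T] by auto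
  have "integrable M (\<lambda>\<omega>. indicator (space N) (T \<omega>) * h (T \<omega>))" using ceA[of "space N"] by simp
  also have "?this \<longleftrightarrow> integrable M (\<lambda>\<omega>. h (T \<omega>))"
    by (rule Bochner_Integration.integrable_cong) (use T_space in \<open>auto simp: Pi_iff\<close>)
  finally have int_h: "integrable M (\<lambda>\<omega>. h (T \<omega>))" .
  show ?thesis
  proof (rule real_cond_exp_charact)
    fix A assume "A \<in> sets (vimage_algebra (space M) T N)"
    then obtain B where B: "B \<in> sets N" "A = T -` B \<inter> space M"
      unfolding sets_vimage_algebra2[OF T_space] by auto
    have set_integral: "(\<integral>\<omega>\<in>A. u \<omega> \<partial>M) = (\<integral>\<omega>. indicator B (T \<omega>) * u \<omega> \<partial>M)" for u :: "'m \<Rightarrow> real"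
      unfolding set_lebesgue_integral_def B(2)
      by (rule Bochner_Integration.integral_cong) (auto simp: indicator_def)
    show "(\<integral>\<omega>\<in>A. V \<omega> \<partial>M) = (\<integral>\<omega>\<in>A. h (T \<omega>) \<partial>M)"
      unfolding set_integral using ceA[OF B(1)] by simp
  next
    show "integrable M V"
      using V square_integrable_imp_integrable unfolding L2fun_def by blast
  qed (use int_h measurable_comp_vimage_algebra[OF T h] in auto)
qed

lemma cond_exp_version_L2fun: "L2fun M (\<lambda>\<omega>. h (T \<omega>))"
proof -
  interpret finite_measure_subalgebra M "vimage_algebra (space M) T N"
    by (rule finite_measure_subalgebra_vimage_algebra[OF prob T])
  have h: "h \<in> borel_measurable N" using ce unfolding cond_exp_version_def by simp
  have "integrable M V" and "integrable M (\<lambda>\<omega>. (V \<omega>)\<^sup>2)"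
    using V square_integrable_imp_integrable unfolding L2fun_def by blast+
  then have "integrable M (\<lambda>\<omega>. (real_cond_exp M (vimage_algebra (space M) T N) V \<omega>)\<^sup>2)"
    by (intro integrable_convex_cond_exp[where I=UNIV and a=0 and b=0])
      (auto simp: convex_power2)
  then have "integrable M (\<lambda>\<omega>. (h (T \<omega>))\<^sup>2)"
    by (rule integrable_cong_AE_imp)
      (use measurable_compose[OF T h] cond_exp_version_AE_eq_real_cond_exp in auto)
  then show ?thesis unfolding L2fun_def using measurable_compose[OF T h] by simp
qed

lemma cond_exp_version_orthogonal:
  assumes \<phi>: "\<phi> \<in> borel_measurable N" "L2fun M (\<lambda>\<omega>. \<phi> (T \<omega>))"
  shows "(\<integral>\<omega>. \<phi> (T \<omega>) * (V \<omega> - h (T \<omega>)) \<partial>M) = 0"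
proof -
  interpret finite_measure_subalgebra M "vimage_algebra (space M) T N"
    by (rule finite_measure_subalgebra_vimage_algebra[OF prob T])
  have h: "h \<in> borel_measurable N" using ce unfolding cond_exp_version_def by simp
  have int_V: "integrable M (\<lambda>\<omega>. \<phi> (T \<omega>) * V \<omega>)"
    and int_h: "integrable M (\<lambda>\<omega>. \<phi> (T \<omega>) * h (T \<omega>))"
    using L2fun_integrable_mult[OF \<phi>(2)] V cond_exp_version_L2fun by auto
  have V_meas: "V \<in> borel_measurable M" using V unfolding L2fun_def by simp
  have "(\<integral>\<omega>. \<phi> (T \<omega>) * V \<omega> \<partial>M)
      = (\<integral>\<omega>. \<phi> (T \<omega>) * real_cond_exp M (vimage_algebra (space M) T N) V \<omega> \<partial>M)"
    by (rule real_cond_exp_intg(2)[symmetric, OF int_V measurable_comp_vimage_algebra[OF T \<phi>(1)] V_meas])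
  also have "\<dots> = (\<integral>\<omega>. \<phi> (T \<omega>) * h (T \<omega>) \<partial>M)"
    by (rule integral_cong_AE)
      (use measurable_compose[OF T \<phi>(1)] measurable_compose[OF T h]
        cond_exp_version_AE_eq_real_cond_exp in auto)
  finally show ?thesis using int_V int_h by (simp add: right_diff_distrib)
qed

end

lemma weighted_square_loss_decomp:
  fixes a b :: real
  assumes "a + b = 1"
    and L2: "L2fun M y\<^sub>1" "L2fun M y\<^sub>2" "L2fun M u\<^sub>1" "L2fun M u\<^sub>2" "L2fun M f"
    and orth: "(\<integral>x. f x * (y\<^sub>1 x - u\<^sub>1 x) \<partial>M) = 0" "(\<integral>x. f x * (y\<^sub>2 x - u\<^sub>2 x) \<partial>M) = 0"
  shows "a * (\<integral>x. (y\<^sub>1 x - f x)\<^sup>2 \<partial>M) + b * (\<integral>x. (y\<^sub>2 x - f x)\<^sup>2 \<partial>M) =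
    (\<integral>x. (a * u\<^sub>1 x + b * u\<^sub>2 x - f x)\<^sup>2 \<partial>M)
    + (\<integral>x. a * (y\<^sub>1 x)\<^sup>2 + b * (y\<^sub>2 x)\<^sup>2 - (a * u\<^sub>1 x + b * u\<^sub>2 x)\<^sup>2 \<partial>M)"
proof -
  have pointwise: "a * (y\<^sub>1 x - f x)\<^sup>2 + b * (y\<^sub>2 x - f x)\<^sup>2 =
      (a * u\<^sub>1 x + b * u\<^sub>2 x - f x)\<^sup>2 + (a * (y\<^sub>1 x)\<^sup>2 + b * (y\<^sub>2 x)\<^sup>2 - (a * u\<^sub>1 x + b * u\<^sub>2 x)\<^sup>2)
      - 2 * a * (f x * (y\<^sub>1 x - u\<^sub>1 x)) - 2 * b * (f x * (y\<^sub>2 x - u\<^sub>2 x))" for x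
    using \<open>a + b = 1\<close> by algebra
  have L2_mix: "L2fun M (\<lambda>x. a * u\<^sub>1 x + b * u\<^sub>2 x)"
    using L2 by (intro L2fun_add L2fun_cmult)
  have "a * (\<integral>x. (y\<^sub>1 x - f x)\<^sup>2 \<partial>M) + b * (\<integral>x. (y\<^sub>2 x - f x)\<^sup>2 \<partial>M)
      = (\<integral>x. a * (y\<^sub>1 x - f x)\<^sup>2 + b * (y\<^sub>2 x - f x)\<^sup>2 \<partial>M)"
    using L2 by (simp add: L2fun_integrable_square L2fun_diff)
  also have "\<dots> = (\<integral>x. (a * u\<^sub>1 x + b * u\<^sub>2 x - f x)\<^sup>2 \<partial>M)
      + (\<integral>x. a * (y\<^sub>1 x)\<^sup>2 + b * (y\<^sub>2 x)\<^sup>2 - (a * u\<^sub>1 x + b * u\<^sub>2 x)\<^sup>2 \<partial>M)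
      - 2 * a * (\<integral>x. f x * (y\<^sub>1 x - u\<^sub>1 x) \<partial>M) - 2 * b * (\<integral>x. f x * (y\<^sub>2 x - u\<^sub>2 x) \<partial>M)"
    unfolding pointwise using L2 L2_mix
    by (simp add: L2fun_integrable_square L2fun_integrable_mult L2fun_diff)
  finally show ?thesis using orth by simp
qed

lemma coupled_square_loss_decomp:
  fixes a b lam p q :: real
  assumes "p + q = 1" and "b * q = lam * a * p"
    and L2: "L2fun M Y" "L2fun M \<mu>" "L2fun M \<eta>" "L2fun M f" "L2fun M g"
    and t: "t = (\<lambda>x. p * \<mu> x + q * \<eta> x)"
    and orth: "(\<integral>x. (f x - \<mu> x) * (Y x - \<mu> x) \<partial>M) = 0"
      "(\<integral>x. (f x - \<mu> x) * (Y x - \<eta> x) \<partial>M) = 0"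
      "(\<integral>x. (g x - t x) * (Y x - \<eta> x) \<partial>M) = 0"
  shows "a * (\<integral>x. (Y x - f x)\<^sup>2 \<partial>M) + b * (\<integral>x. (g x - f x)\<^sup>2 \<partial>M)
      + lam * a * (\<integral>x. (Y x - g x)\<^sup>2 \<partial>M)
    = a * (\<integral>x. (Y x - \<mu> x)\<^sup>2 \<partial>M) + b * (\<integral>x. (t x - \<mu> x)\<^sup>2 \<partial>M)
      + lam * a * (\<integral>x. (Y x - t x)\<^sup>2 \<partial>M)
      + a * (\<integral>x. (f x - \<mu> x)\<^sup>2 \<partial>M) + b * (\<integral>x. (g x - t x - (f x - \<mu> x))\<^sup>2 \<partial>M)
      + lam * a * (\<integral>x. (g x - t x)\<^sup>2 \<partial>M)"
proof -
  have pointwise: "a * (Y x - f x)\<^sup>2 + b * (g x - f x)\<^sup>2 + lam * a * (Y x - g x)\<^sup>2 =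
      a * (Y x - \<mu> x)\<^sup>2 + b * (t x - \<mu> x)\<^sup>2 + lam * a * (Y x - t x)\<^sup>2
      + a * (f x - \<mu> x)\<^sup>2 + b * (g x - t x - (f x - \<mu> x))\<^sup>2 + lam * a * (g x - t x)\<^sup>2
      - 2 * (a + b * q) * ((f x - \<mu> x) * (Y x - \<mu> x)) + 2 * (b * q) * ((f x - \<mu> x) * (Y x - \<eta> x))
      - 2 * (lam * a) * ((g x - t x) * (Y x - \<eta> x))" for x
    using assms(1,2) unfolding t by algebra
  have L2_t: "L2fun M t" unfolding t using L2 by (intro L2fun_add L2fun_cmult)
  have "a * (\<integral>x. (Y x - f x)\<^sup>2 \<partial>M) + b * (\<integral>x. (g x - f x)\<^sup>2 \<partial>M)
      + lam * a * (\<integral>x. (Y x - g x)\<^sup>2 \<partial>M)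
    = (\<integral>x. a * (Y x - f x)\<^sup>2 + b * (g x - f x)\<^sup>2 + lam * a * (Y x - g x)\<^sup>2 \<partial>M)"
    using L2 by (simp add: L2fun_integrable_square L2fun_diff)
  also have "\<dots> = a * (\<integral>x. (Y x - \<mu> x)\<^sup>2 \<partial>M) + b * (\<integral>x. (t x - \<mu> x)\<^sup>2 \<partial>M)
      + lam * a * (\<integral>x. (Y x - t x)\<^sup>2 \<partial>M)
      + a * (\<integral>x. (f x - \<mu> x)\<^sup>2 \<partial>M) + b * (\<integral>x. (g x - t x - (f x - \<mu> x))\<^sup>2 \<partial>M)
      + lam * a * (\<integral>x. (g x - t x)\<^sup>2 \<partial>M)
      - 2 * (a + b * q) * (\<integral>x. (f x - \<mu> x) * (Y x - \<mu> x) \<partial>M)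
      + 2 * (b * q) * (\<integral>x. (f x - \<mu> x) * (Y x - \<eta> x) \<partial>M)
      - 2 * (lam * a) * (\<integral>x. (g x - t x) * (Y x - \<eta> x) \<partial>M)"
    unfolding pointwise using L2 L2_t
    by (simp add: L2fun_integrable_square L2fun_integrable_mult L2fun_diff)
  finally show ?thesis using orth by simp
qed

lemma is_proj_of_loss_eq:
  fixes L :: "('a \<Rightarrow> real) \<Rightarrow> real" and \<kappa> C :: real
  assumes "c \<in> S" and min: "\<And>c'. c' \<in> S \<Longrightarrow> L c \<le> L c'" and "\<kappa> > 0"
    and L: "\<And>c'. c' \<in> S \<Longrightarrow> L c' = \<kappa> * (\<integral>\<omega>. (h (T \<omega>) - c' (T \<omega>))\<^sup>2 \<partial>M) + C"
  shows "is_proj M T S h c"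
  unfolding is_proj_def
proof (intro conjI ballI)
  fix c' assume "c' \<in> S"
  then show "(\<integral>\<omega>. (h (T \<omega>) - c (T \<omega>))\<^sup>2 \<partial>M) \<le> (\<integral>\<omega>. (h (T \<omega>) - c' (T \<omega>))\<^sup>2 \<partial>M)"
    using min[of c'] L[of c] L[of c'] \<open>c \<in> S\<close> \<open>\<kappa> > 0\<close> by simp
qed (fact \<open>c \<in> S\<close>)

locale popLoss_setting = prob_space M for M :: "'m measure" +
  fixes MX :: "'x measure" and MW :: "'w measure"
    and X :: "'m \<Rightarrow> 'x" and W :: "'m \<Rightarrow> 'w" and Y :: "'m \<Rightarrow> real"
    and n m :: nat and lam :: real
    and F :: "('x \<Rightarrow> real) set" and G :: "('x \<times> 'w \<Rightarrow> real) set"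
    and \<mu> :: "'x \<Rightarrow> real" and \<eta> :: "'x \<times> 'w \<Rightarrow> real"
  assumes X_meas: "X \<in> measurable M MX" and W_meas: "W \<in> measurable M MW"
    and L2_Y: "L2fun M Y"
    and n_pos: "n \<ge> 1" and m_pos: "m \<ge> 1" and lam_nonneg: "lam \<ge> 0"
    and F: "L2ccset (distr M MX X) F"
    and G: "L2ccset (distr M (MX \<Otimes>\<^sub>M MW) (\<lambda>\<omega>. (X \<omega>, W \<omega>))) G"
    and \<mu>: "cond_exp_version M MX X Y \<mu>"
    and \<eta>: "cond_exp_version M (MX \<Otimes>\<^sub>M MW) (\<lambda>\<omega>. (X \<omega>, W \<omega>)) Y \<eta>"
begin

definition wn :: real where "wn = real n / real (n + m)"
definition wm :: real where "wm = real m / real (n + m)"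
definition cf :: real where "cf = real m / (real m + real n * lam)"
definition c\<eta> :: real where "c\<eta> = real n * lam / (real m + real n * lam)"

lemma wn_pos: "wn > 0" and wm_pos: "wm > 0" and wn_wm_sum: "wn + wm = 1"
  using n_pos m_pos unfolding wn_def wm_def by (simp_all flip: add_divide_distrib)

lemma mix_denom_pos: "real m + real n * lam > 0"
  using m_pos lam_nonneg by (simp add: add_pos_nonneg)

lemma cf_nonneg: "cf \<ge> 0" and c\<eta>_nonneg: "c\<eta> \<ge> 0" and cf_c\<eta>_sum: "cf + c\<eta> = 1"
  using mix_denom_pos lam_nonneg unfolding cf_def c\<eta>_def by (simp_all flip: add_divide_distrib)

lemma wm_c\<eta>_eq: "wm * c\<eta> = lam * wn * cf"
  unfolding wm_def wn_def cf_def c\<eta>_def by simp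

lemma popLoss_eq:
  "popLoss M X W Y n m lam f g =
     wn * (\<integral>\<omega>. (Y \<omega> - f (X \<omega>))\<^sup>2 \<partial>M) + wm * (\<integral>\<omega>. (g (X \<omega>, W \<omega>) - f (X \<omega>))\<^sup>2 \<partial>M)
     + lam * wn * (\<integral>\<omega>. (Y \<omega> - g (X \<omega>, W \<omega>))\<^sup>2 \<partial>M)"
  unfolding popLoss_def wn_def wm_def ..

lemma Z_meas: "(\<lambda>\<omega>. (X \<omega>, W \<omega>)) \<in> measurable M (MX \<Otimes>\<^sub>M MW)"
  using X_meas W_meas by (rule measurable_Pair)

lemmas F_memD = L2ccset_distr_memD[OF F X_meas]
lemmas G_memD = L2ccset_distr_memD[OF G Z_meas]

lemma \<mu>_meas: "\<mu> \<in> borel_measurable MX" and \<eta>_meas: "\<eta> \<in> borel_measurable (MX \<Otimes>\<^sub>M MW)"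
  using \<mu> \<eta> unfolding cond_exp_version_def by auto

lemmas L2_\<mu> = cond_exp_version_L2fun[OF prob_space_axioms X_meas L2_Y \<mu>]
lemmas L2_\<eta> = cond_exp_version_L2fun[OF prob_space_axioms Z_meas L2_Y \<eta>]
lemmas orthogonal_\<mu> = cond_exp_version_orthogonal[OF prob_space_axioms X_meas L2_Y \<mu>]
lemmas orthogonal_\<eta> = cond_exp_version_orthogonal[OF prob_space_axioms Z_meas L2_Y \<eta>]

lemma popLoss_le_unconstrained_min_imp_AE_eq:
  assumes f: "f \<in> borel_measurable MX" "L2fun M (\<lambda>\<omega>. f (X \<omega>))"
    and g: "g \<in> borel_measurable (MX \<Otimes>\<^sub>M MW)" "L2fun M (\<lambda>\<omega>. g (X \<omega>, W \<omega>))"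
    and le: "popLoss M X W Y n m lam f g
      \<le> popLoss M X W Y n m lam \<mu> (\<lambda>z. cf * \<mu> (fst z) + c\<eta> * \<eta> z)"
  shows "AE \<omega> in M. f (X \<omega>) = \<mu> (X \<omega>)"
    and "AE \<omega> in M. g (X \<omega>, W \<omega>) = cf * \<mu> (X \<omega>) + c\<eta> * \<eta> (X \<omega>, W \<omega>)"
proof -
  define t where "t = (\<lambda>\<omega>. cf * \<mu> (X \<omega>) + c\<eta> * \<eta> (X \<omega>, W \<omega>))"
  define df where "df \<omega> = f (X \<omega>) - \<mu> (X \<omega>)" for \<omega>
  define dg where "dg \<omega> = g (X \<omega>, W \<omega>) - t \<omega>" for \<omega>
  have L2_df: "L2fun M df" unfolding df_def by (intro L2fun_diff f L2_\<mu>)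
  have L2_dg: "L2fun M dg" unfolding dg_def t_def by (intro L2fun_diff L2fun_add L2fun_cmult g L2_\<mu> L2_\<eta>)
  have "(\<integral>\<omega>. df \<omega> * (Y \<omega> - \<mu> (X \<omega>)) \<partial>M) = 0"
    using orthogonal_\<mu>[of "\<lambda>x. f x - \<mu> x"] L2_df f \<mu>_meas unfolding df_def by simp
  moreover have "(\<integral>\<omega>. df \<omega> * (Y \<omega> - \<eta> (X \<omega>, W \<omega>)) \<partial>M) = 0"
    using orthogonal_\<eta>[of "\<lambda>z. f (fst z) - \<mu> (fst z)"] L2_df f \<mu>_meas unfolding df_def by simp
  moreover have "(\<integral>\<omega>. dg \<omega> * (Y \<omega> - \<eta> (X \<omega>, W \<omega>)) \<partial>M) = 0"
    using orthogonal_\<eta>[of "\<lambda>z. g z - (cf * \<mu> (fst z) + c\<eta> * \<eta> z)"] L2_dg g \<mu>_meas \<eta>_meas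
    unfolding dg_def t_def by simp
  ultimately have excess: "popLoss M X W Y n m lam f g
      = popLoss M X W Y n m lam \<mu> (\<lambda>z. cf * \<mu> (fst z) + c\<eta> * \<eta> z)
        + wn * (\<integral>\<omega>. (df \<omega>)\<^sup>2 \<partial>M) + wm * (\<integral>\<omega>. (dg \<omega> - df \<omega>)\<^sup>2 \<partial>M)
        + lam * wn * (\<integral>\<omega>. (dg \<omega>)\<^sup>2 \<partial>M)"
    using coupled_square_loss_decomp[OF cf_c\<eta>_sum wm_c\<eta>_eq L2_Y L2_\<mu> L2_\<eta> f(2) g(2) t_def]
    unfolding popLoss_eq df_def dg_def t_def by simp
  have "wn * (\<integral>\<omega>. (df \<omega>)\<^sup>2 \<partial>M) \<ge> 0" "wm * (\<integral>\<omega>. (dg \<omega> - df \<omega>)\<^sup>2 \<partial>M) \<ge> 0"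
    "lam * wn * (\<integral>\<omega>. (dg \<omega>)\<^sup>2 \<partial>M) \<ge> 0"
    using wn_pos wm_pos lam_nonneg by simp_all
  then have "wn * (\<integral>\<omega>. (df \<omega>)\<^sup>2 \<partial>M) = 0" "wm * (\<integral>\<omega>. (dg \<omega> - df \<omega>)\<^sup>2 \<partial>M) = 0"
    using le excess by linarith+
  then have "(\<integral>\<omega>. (df \<omega>)\<^sup>2 \<partial>M) = 0" "(\<integral>\<omega>. (dg \<omega> - df \<omega>)\<^sup>2 \<partial>M) = 0"
    using wn_pos wm_pos by simp_all
  then have "AE \<omega> in M. df \<omega> = 0" "AE \<omega> in M. dg \<omega> - df \<omega> = 0"
    using L2fun_integral_square_eq_0_AE L2_df L2fun_diff[OF L2_dg L2_df] by blast+
  then show "AE \<omega> in M. f (X \<omega>) = \<mu> (X \<omega>)"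
    and "AE \<omega> in M. g (X \<omega>, W \<omega>) = cf * \<mu> (X \<omega>) + c\<eta> * \<eta> (X \<omega>, W \<omega>)"
    unfolding df_def dg_def t_def by (auto elim: AE_mp)
qed

end

locale popLoss_minimizer = popLoss_setting +
  fixes fs :: "'x \<Rightarrow> real" and gs :: "'x \<times> 'w \<Rightarrow> real"
  assumes fs_F: "fs \<in> F" and gs_G: "gs \<in> G"
    and minimal: "\<forall>f\<in>F. \<forall>g\<in>G. popLoss M X W Y n m lam fs gs \<le> popLoss M X W Y n m lam f g"
begin

lemma fs_is_proj:
  assumes k: "cond_exp_version M MX X (\<lambda>\<omega>. gs (X \<omega>, W \<omega>)) k"
  shows "is_proj M X F (\<lambda>x. real n / real (n + m) * \<mu> x + real m / real (n + m) * k x) fs"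
proof -
  have L2_gs: "L2fun M (\<lambda>\<omega>. gs (X \<omega>, W \<omega>))" by (rule G_memD(2)[OF gs_G])
  note L2_k = cond_exp_version_L2fun[OF prob_space_axioms X_meas L2_gs k]
    and orthogonal_k = cond_exp_version_orthogonal[OF prob_space_axioms X_meas L2_gs k]
  define C where "C = (\<integral>\<omega>. wn * (Y \<omega>)\<^sup>2 + wm * (gs (X \<omega>, W \<omega>))\<^sup>2
      - (wn * \<mu> (X \<omega>) + wm * k (X \<omega>))\<^sup>2 \<partial>M) + lam * wn * (\<integral>\<omega>. (Y \<omega> - gs (X \<omega>, W \<omega>))\<^sup>2 \<partial>M)"
  show ?thesis
    unfolding wn_def[symmetric] wm_def[symmetric]
  proof (rule is_proj_of_loss_eq[where L = "\<lambda>f. popLoss M X W Y n m lam f gs" and \<kappa> = 1 and C = C])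
    fix f assume "f \<in> F"
    note f = F_memD[OF this]
    show "popLoss M X W Y n m lam f gs
        = 1 * (\<integral>\<omega>. (wn * \<mu> (X \<omega>) + wm * k (X \<omega>) - f (X \<omega>))\<^sup>2 \<partial>M) + C"
      using weighted_square_loss_decomp[OF wn_wm_sum L2_Y L2_gs L2_\<mu> L2_k f(2)
          orthogonal_\<mu>[OF f] orthogonal_k[OF f]]
      unfolding popLoss_eq C_def by simp
  qed (use fs_F gs_G minimal in auto)
qed

lemma gs_is_proj:
  "is_proj M (\<lambda>\<omega>. (X \<omega>, W \<omega>)) G
     (\<lambda>z. real m / (real m + real n * lam) * fs (fst z)
        + real n * lam / (real m + real n * lam) * \<eta> z) gs"
proof -
  define \<kappa> where "\<kappa> = (real m + real n * lam) / real (n + m)"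
  have "\<kappa> > 0" using mix_denom_pos n_pos unfolding \<kappa>_def by simp
  have wm_eq: "wm = \<kappa> * cf" and lam_wn_eq: "lam * wn = \<kappa> * c\<eta>"
    using mix_denom_pos unfolding \<kappa>_def wm_def wn_def cf_def c\<eta>_def by simp_all
  note fs = F_memD[OF fs_F]
  define C\<^sub>0 where "C\<^sub>0 = (\<integral>\<omega>. cf * (fs (X \<omega>))\<^sup>2 + c\<eta> * (Y \<omega>)\<^sup>2
      - (cf * fs (X \<omega>) + c\<eta> * \<eta> (X \<omega>, W \<omega>))\<^sup>2 \<partial>M)"
  define C where "C = \<kappa> * C\<^sub>0 + wn * (\<integral>\<omega>. (Y \<omega> - fs (X \<omega>))\<^sup>2 \<partial>M)"
  show ?thesis
    unfolding cf_def[symmetric] c\<eta>_def[symmetric]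
  proof (rule is_proj_of_loss_eq[where L = "\<lambda>g. popLoss M X W Y n m lam fs g" and \<kappa> = \<kappa> and C = C])
    fix g assume "g \<in> G"
    note g = G_memD[OF this]
    have decomp: "cf * (\<integral>\<omega>. (fs (X \<omega>) - g (X \<omega>, W \<omega>))\<^sup>2 \<partial>M) + c\<eta> * (\<integral>\<omega>. (Y \<omega> - g (X \<omega>, W \<omega>))\<^sup>2 \<partial>M)
        = (\<integral>\<omega>. (cf * fs (X \<omega>) + c\<eta> * \<eta> (X \<omega>, W \<omega>) - g (X \<omega>, W \<omega>))\<^sup>2 \<partial>M) + C\<^sub>0"
      unfolding C\<^sub>0_def
      by (rule weighted_square_loss_decomp[OF cf_c\<eta>_sum fs(2) L2_Y fs(2) L2_\<eta> g(2) _ orthogonal_\<eta>[OF g]])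
        simp
    have "(\<integral>\<omega>. (g (X \<omega>, W \<omega>) - fs (X \<omega>))\<^sup>2 \<partial>M) = (\<integral>\<omega>. (fs (X \<omega>) - g (X \<omega>, W \<omega>))\<^sup>2 \<partial>M)"
      by (simp add: power2_commute)
    then have "popLoss M X W Y n m lam fs g = wn * (\<integral>\<omega>. (Y \<omega> - fs (X \<omega>))\<^sup>2 \<partial>M)
        + \<kappa> * (cf * (\<integral>\<omega>. (fs (X \<omega>) - g (X \<omega>, W \<omega>))\<^sup>2 \<partial>M)
          + c\<eta> * (\<integral>\<omega>. (Y \<omega> - g (X \<omega>, W \<omega>))\<^sup>2 \<partial>M))"
      unfolding popLoss_eq wm_eq lam_wn_eq by (simp add: algebra_simps)
    also have "\<dots> = \<kappa> * (\<integral>\<omega>. (cf * fs (X \<omega>) + c\<eta> * \<eta> (X \<omega>, W \<omega>) - g (X \<omega>, W \<omega>))\<^sup>2 \<partial>M) + C"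
      unfolding decomp C_def by (simp add: algebra_simps)
    finally show "popLoss M X W Y n m lam fs g
        = \<kappa> * (\<integral>\<omega>. (cf * fs (fst (X \<omega>, W \<omega>)) + c\<eta> * \<eta> (X \<omega>, W \<omega>) - g (X \<omega>, W \<omega>))\<^sup>2 \<partial>M) + C"
      by simp
  qed (use \<open>\<kappa> > 0\<close> fs_F gs_G minimal in auto)
qed

lemma minimizer_eq_if_realizable:
  "\<mu> \<in> F \<and> (\<lambda>z. \<mu> (fst z)) \<in> G \<and> \<eta> \<in> G \<longrightarrow>
     (AE x in distr M MX X. fs x = \<mu> x)
   \<and> (AE z in distr M (MX \<Otimes>\<^sub>M MW) (\<lambda>\<omega>. (X \<omega>, W \<omega>)).
        gs z = real m / (real m + real n * lam) * \<mu> (fst z)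
             + real n * lam / (real m + real n * lam) * \<eta> z)"
  unfolding cf_def[symmetric] c\<eta>_def[symmetric]
proof (intro impI)
  assume realizable: "\<mu> \<in> F \<and> (\<lambda>z. \<mu> (fst z)) \<in> G \<and> \<eta> \<in> G"
  have "1 - cf = c\<eta>" using cf_c\<eta>_sum by simp
  then have "(\<lambda>z. cf * \<mu> (fst z) + c\<eta> * \<eta> z) \<in> G"
    using L2ccset_convex_comb[OF G, of "\<lambda>z. \<mu> (fst z)" \<eta> cf] realizable cf_nonneg c\<eta>_nonneg
    by simp
  then have "popLoss M X W Y n m lam fs gs
      \<le> popLoss M X W Y n m lam \<mu> (\<lambda>z. cf * \<mu> (fst z) + c\<eta> * \<eta> z)"
    using minimal realizable by blast
  note AE_eq = popLoss_le_unconstrained_min_imp_AE_eq[OF F_memD[OF fs_F] G_memD[OF gs_G] this]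
  have "{x \<in> space MX. fs x = \<mu> x} \<in> sets MX"
    and "{z \<in> space (MX \<Otimes>\<^sub>M MW). gs z = cf * \<mu> (fst z) + c\<eta> * \<eta> z} \<in> sets (MX \<Otimes>\<^sub>M MW)"
    using F_memD(1)[OF fs_F] G_memD(1)[OF gs_G] \<mu>_meas \<eta>_meas by measurable
  then show "(AE x in distr M MX X. fs x = \<mu> x)
    \<and> (AE z in distr M (MX \<Otimes>\<^sub>M MW) (\<lambda>\<omega>. (X \<omega>, W \<omega>)). gs z = cf * \<mu> (fst z) + c\<eta> * \<eta> z)"
    using AE_distr_iff[OF X_meas] AE_distr_iff[OF Z_meas] AE_eq by simp
qed

end

theorem theorem2p1:
  fixes M :: "'m measure" and MX :: "'x measure" and MW :: "'w measure"
    and X :: "'m \<Rightarrow> 'x" and W :: "'m \<Rightarrow> 'w" and Y :: "'m \<Rightarrow> real"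
    and n m :: nat and lam :: real
    and F :: "('x \<Rightarrow> real) set" and G :: "('x \<times> 'w \<Rightarrow> real) set"
    and \<mu> :: "'x \<Rightarrow> real" and \<eta> :: "'x \<times> 'w \<Rightarrow> real"
    and fs :: "'x \<Rightarrow> real" and gs :: "'x \<times> 'w \<Rightarrow> real"
  assumes prob: "prob_space M"
    and Xmeas: "X \<in> measurable M MX" and Wmeas: "W \<in> measurable M MW"
    and Ymeas: "Y \<in> borel_measurable M" and Y2: "integrable M (\<lambda>\<omega>. (Y \<omega>)\<^sup>2)"
    and n1: "n \<ge> 1" and m1: "m \<ge> 1" and lam0: "lam \<ge> 0"
    and Fcc: "L2ccset (distr M MX X) F"
    and Gcc: "L2ccset (distr M (MX \<Otimes>\<^sub>M MW) (\<lambda>\<omega>. (X \<omega>, W \<omega>))) G"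
    and \<mu>_def: "cond_exp_version M MX X Y \<mu>"
    and \<eta>_def: "cond_exp_version M (MX \<Otimes>\<^sub>M MW) (\<lambda>\<omega>. (X \<omega>, W \<omega>)) Y \<eta>"
    and fsF: "fs \<in> F" and gsG: "gs \<in> G"
    and minim: "\<forall>f\<in>F. \<forall>g\<in>G. popLoss M X W Y n m lam fs gs \<le> popLoss M X W Y n m lam f g"
  shows "(\<forall>k. cond_exp_version M MX X (\<lambda>\<omega>. gs (X \<omega>, W \<omega>)) k \<longrightarrow>
            is_proj M X F (\<lambda>x. real n / real (n + m) * \<mu> x + real m / real (n + m) * k x) fs)
       \<and> is_proj M (\<lambda>\<omega>. (X \<omega>, W \<omega>)) G
            (\<lambda>z. real m / (real m + real n * lam) * fs (fst z)
               + real n * lam / (real m + real n * lam) * \<eta> z) gs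
       \<and> (\<mu> \<in> F \<and> (\<lambda>z. \<mu> (fst z)) \<in> G \<and> \<eta> \<in> G \<longrightarrow>
            (AE x in distr M MX X. fs x = \<mu> x)
          \<and> (AE z in distr M (MX \<Otimes>\<^sub>M MW) (\<lambda>\<omega>. (X \<omega>, W \<omega>)).
                gs z = real m / (real m + real n * lam) * \<mu> (fst z)
                     + real n * lam / (real m + real n * lam) * \<eta> z))"
proof -
  interpret popLoss_minimizer M MX MW X W Y n m lam F G \<mu> \<eta> fs gs
    using assms unfolding popLoss_minimizer_def popLoss_minimizer_axioms_def
      popLoss_setting_def popLoss_setting_axioms_def L2fun_def
    by blast
  show ?thesis using fs_is_proj gs_is_proj minimizer_eq_if_realizable by blast
qed

end
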